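(* Let $n,m\in\mathbb Z$ and $k\ge0$. Then, in $\mathbb C_w[x,x^{-1},y,y^{-1}]$, \[ \binom{n+m}{k}_w=\sum_{j=0}^{k}\binom{n}{j}_w\Big(x^jy^{n-j}\,\binom{m}{k-j}_w\,y^{j-n}x^{-j}\Big)\prod_{i=1}^{k-j}W(i+j,n-j), \] and this is an identity in the commutative ring $\mathbb C[(w(s,t))_{s,t\in\mathbb Z}]$ (after evaluating the conjugations).
   Context: Let $(w(s,t))_{s,t\in\mathbb Z}$ be commuting invertible variables, and $\mathbb C_w[x,x^{-1},y,y^{-1}]$ the associative unital $\mathbb C$-algebra generated by $x^{\pm1},y^{\pm1}$ and the $w(s,t)^{\pm1}$ subject to $x^{-1}x=xx^{-1}=1$, $y^{-1}y=yy^{-1}=1$, $yx=w(1,1)xy$, $x\,w(s,t)=w(s+1,t)x$, $y\,w(s,t)=w(s,t+1)y$. (Consequently, for any expression $f$ in the weights, $x^jy^{n-j}fy^{j-n}x^{-j}$ is $f$ with each $w(s,t)$ replaced by $w(s+j,t+n-j)$.) Product convention: $\prod_{j=l}^m A_j=A_l\cdots A_m$ if $m>l-1$, $=1$ if $m=l-1$, $=A_{l-1}^{-1}\cdots A_{m+1}^{-1}$ if $m<l-1$. $W(s,t)=\prod_{j=1}^tw(s,j)$. $\binom nk_w$ ($n,k\in\mathbb Z$) is the unique family with $\binom n0_w=\binom nn_w=1$ for all $n$ and $\binom{n+1}{k}_w=\binom nk_w+\binom n{k-1}_wW(k,n+1-k)$ whenever $(n+1,k)\ne(0,0)$. *)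

theory Defs
  imports Main
begin

definition gprod :: "(int \<Rightarrow> 'a::field) \<Rightarrow> int \<Rightarrow> int \<Rightarrow> 'a" where
  "gprod A l m = (if l \<le> m + 1 then (\<Prod>j\<in>{l..m}. A j)
                  else (\<Prod>j\<in>{m+1..l-1}. inverse (A j)))"

definition bigW :: "(int \<Rightarrow> int \<Rightarrow> 'a::field) \<Rightarrow> int \<Rightarrow> int \<Rightarrow> 'a" where
  "bigW w s t = gprod (w s) 1 t"

definition wbinom :: "(int \<Rightarrow> int \<Rightarrow> 'a::field) \<Rightarrow> int \<Rightarrow> int \<Rightarrow> 'a" where
  "wbinom w = (THE f. (\<forall>n. f n 0 = 1 \<and> f n n = 1) \<and>
      (\<forall>n k. (n + 1, k) \<noteq> (0, 0) \<longrightarrow>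
          f (n + 1) k = f n k + f n (k - 1) * bigW w k (n + 1 - k)))"

end

theory Submission
  imports Defs
begin

text \<open>
  For nonzero weights the family is pinned down by its Pascal-type recurrence: row 0 is forced to
  be the Kronecker delta, the rows n > 0 are generated upwards from it, and each negative row is
  the solution of a first-order linear recurrence in k, determined by the row above and by one
  prescribed value (two at n = -1, where the recurrence at k = 0 is exempt).

  For the identity, fix n and view both sides as functions of (m, k) with k \<ge> 0. They agree
  for k = 0 and for m = 0 (row 0 of the conjugated family is again the delta), and both satisfy
  the recurrence in m with coefficient W(k, n + m + 1 - k): for the right-hand side this is the
  recurrence of the conjugated family, because conjugation shifts the second weight index by
  n - j, so the W-factor of the conjugated family times W(k, n - j) is W(k, n + m + 1 - k).
  Such a recurrence determines its solution from these boundary values in both directions of m.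
\<close>

lemma gprod_last:
  fixes A :: "int \<Rightarrow> 'a::field"
  assumes "\<forall>t. A t \<noteq> 0"
  shows "gprod A l (m + 1) = gprod A l m * A (m + 1)"
proof -
  consider "l \<le> m + 1" | "l = m + 2" | "m + 2 < l" by linarith
  then show ?thesis
  proof cases
    case 1
    then have "{l..m + 1} = insert (m + 1) {l..m}" by auto
    with 1 show ?thesis by (simp add: gprod_def mult.commute)
  next
    case 2
    with assms show ?thesis by (simp add: gprod_def add.commute)
  next
    case 3
    then have "{m + 1..l - 1} = insert (m + 1) {m + 2..l - 1}" by auto
    with 3 assms show ?thesis by (simp add: gprod_def add.commute)
  qed
qed

lemma gprod_nonzero:
  fixes A :: "int \<Rightarrow> 'a::field"
  assumes "\<forall>t. A t \<noteq> 0"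
  shows "gprod A l m \<noteq> 0"
  using assms by (simp add: gprod_def)

lemma gprod_split:
  fixes A :: "int \<Rightarrow> 'a::field"
  assumes nz: "\<forall>t. A t \<noteq> 0"
  shows "gprod A a c = gprod A a b * gprod A (b + 1) c"
proof (induction c rule: int_induct[where k = b])
  case base
  then show ?case by (simp add: gprod_def)
next
  case (step1 i)
  then show ?case by (simp add: gprod_last[OF nz] mult.assoc)
next
  case (step2 i)
  then show ?case using gprod_last[OF nz, of _ "i - 1"] nz by (simp add: mult.assoc)
qed

lemma gprod_shift:
  fixes A :: "int \<Rightarrow> 'a::field"
  assumes nz: "\<forall>t. A t \<noteq> 0"
  shows "gprod (\<lambda>r. A (r + c)) l m = gprod A (l + c) (m + c)"
proof (induction m rule: int_induct[where k = "l - 1"])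
  case base
  then show ?case by (simp add: gprod_def)
next
  case (step1 i)
  then show ?case
    using gprod_last[of "\<lambda>r. A (r + c)" l i] gprod_last[OF nz, of "l + c" "i + c"] nz
    by (simp add: ac_simps)
next
  case (step2 i)
  then show ?case
    using gprod_last[of "\<lambda>r. A (r + c)" l "i - 1"] gprod_last[OF nz, of "l + c" "i - 1 + c"] nz
    by (simp add: ac_simps)
qed

lemma bigW_nonzero: "\<forall>s t. w s t \<noteq> 0 \<Longrightarrow> bigW w s t \<noteq> 0"
  unfolding bigW_def by (rule gprod_nonzero) simp

lemma bigW_0 [simp]: "bigW w s 0 = 1"
  by (simp add: bigW_def gprod_def)

lemma bigW_add:
  fixes w :: "int \<Rightarrow> int \<Rightarrow> 'a::field"
  assumes "\<forall>t. w s t \<noteq> 0"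
  shows "bigW w s (a + b) = bigW w s a * bigW (\<lambda>s t. w s (t + a)) s b"
  using gprod_split[OF assms, of 1 "a + b" a] gprod_shift[OF assms, of a 1 b]
  by (simp add: bigW_def ac_simps)

lemma first_order_recurrence_exists:
  fixes a g :: "int \<Rightarrow> 'a::field"
  assumes nz: "\<forall>j. a j \<noteq> 0"
  shows "\<exists>h. h (c - 1) = u \<and> h c = v \<and> (\<forall>j. j \<noteq> c \<longrightarrow> g j = h j + h (j - 1) * a j)"
proof -
  define up where "up = rec_nat v (\<lambda>i x. g (c + int i + 1) - x * a (c + int i + 1))"
  define down where "down = rec_nat u (\<lambda>i x. (g (c - int i - 1) - x) / a (c - int i - 1))"
  define h where "h j = (if c \<le> j then up (nat (j - c)) else down (nat (c - 1 - j)))" for j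
  have up_Suc: "up (Suc i) = g (c + int i + 1) - up i * a (c + int i + 1)" for i
    by (simp add: up_def)
  have down_Suc: "down (Suc i) = (g (c - int i - 1) - down i) / a (c - int i - 1)" for i
    by (simp add: down_def)
  have "g j = h j + h (j - 1) * a j" if "j \<noteq> c" for j
  proof (cases "c < j")
    case True
    define i where "i = nat (j - 1 - c)"
    with True have j: "j = c + int i + 1" by simp
    then have "h j = up (Suc i)" "h (j - 1) = up i" by (simp_all add: h_def nat_add_distrib)
    with j show ?thesis by (simp add: up_Suc)
  next
    case False
    define i where "i = nat (c - 1 - j)"
    with False that have j: "j = c - int i - 1" by simp
    then have "h j = down i" "h (j - 1) = down (Suc i)" by (simp_all add: h_def nat_add_distrib)
    with j nz show ?thesis by (simp add: down_Suc)
  qed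
  moreover have "h (c - 1) = u" "h c = v" by (simp_all add: h_def up_def down_def)
  ultimately show ?thesis by blast
qed

lemma first_order_recurrence_unique:
  fixes a g h1 h2 :: "int \<Rightarrow> 'a::field"
  assumes nz: "\<forall>j. a j \<noteq> 0"
    and h1: "\<forall>j. j \<noteq> c \<longrightarrow> g j = h1 j + h1 (j - 1) * a j"
    and h2: "\<forall>j. j \<noteq> c \<longrightarrow> g j = h2 j + h2 (j - 1) * a j"
    and "h1 (c - 1) = h2 (c - 1)" and "h1 c = h2 c"
  shows "h1 = h2"
proof
  fix j
  show "h1 j = h2 j"
  proof (induction j rule: int_induct[where k = c])
    case base
    show ?case by fact
  next
    case (step1 i)
    then have "i + 1 \<noteq> c" by simp
    then have "h1 (i + 1) + h1 i * a (i + 1) = h2 (i + 1) + h2 i * a (i + 1)"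
      using h1[rule_format, of "i + 1"] h2[rule_format, of "i + 1"] by simp
    with step1 show ?case by simp
  next
    case (step2 i)
    show ?case
    proof (cases "i = c")
      case False
      then have "h1 i + h1 (i - 1) * a i = h2 i + h2 (i - 1) * a i"
        using h1 h2 by simp
      with step2 have "h1 (i - 1) * a i = h2 (i - 1) * a i" by simp
      with nz show ?thesis by simp
    qed (use assms in simp)
  qed
qed

definition wbinom_rec :: "(int \<Rightarrow> int \<Rightarrow> 'a::field) \<Rightarrow> (int \<Rightarrow> int \<Rightarrow> 'a) \<Rightarrow> bool" where
  "wbinom_rec w f \<longleftrightarrow> (\<forall>n k. (n + 1, k) \<noteq> (0, 0) \<longrightarrow>
      f (n + 1) k = f n k + f n (k - 1) * bigW w k (n + 1 - k))"

definition is_wbinom :: "(int \<Rightarrow> int \<Rightarrow> 'a::field) \<Rightarrow> (int \<Rightarrow> int \<Rightarrow> 'a) \<Rightarrow> bool" where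
  "is_wbinom w f \<longleftrightarrow> (\<forall>n. f n 0 = 1 \<and> f n n = 1) \<and> wbinom_rec w f"

lemma wbinom_eq_The: "wbinom w = (THE f. is_wbinom w f)"
  by (simp add: wbinom_def is_wbinom_def wbinom_rec_def)

lemma wbinom_recD:
  "wbinom_rec w f \<Longrightarrow> (n + 1, k) \<noteq> (0, 0) \<Longrightarrow>
    f (n + 1) k = f n k + f n (k - 1) * bigW w k (n + 1 - k)"
  by (simp add: wbinom_rec_def)

lemma wbinom_rec_vanish_left:
  assumes rec: "wbinom_rec w f" and col: "\<forall>n. f n 0 = 1" and nz: "\<forall>s t. w s t \<noteq> 0"
    and "k < 0" and "0 \<le> n \<or> n < k"
  shows "f n k = 0"
  using assms(4,5)
proof (induction k arbitrary: n rule: int_less_induct)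
  case base
  then have "f (n + 1) 0 = f n 0 + f n (0 - 1) * bigW w 0 (n + 1 - 0)"
    by (intro wbinom_recD[OF rec]) auto
  with col bigW_nonzero[OF nz] show ?case by simp
next
  case (step i)
  then have "f (n + 1) i = f n i + f n (i - 1) * bigW w i (n + 1 - i)"
    by (intro wbinom_recD[OF rec]) auto
  moreover have "f (n + 1) i = 0" "f n i = 0" using step by auto
  ultimately show ?case using bigW_nonzero[OF nz] by simp
qed

lemma wbinom_rec_vanish_above_diag:
  assumes rec: "wbinom_rec w f" and diag: "\<forall>n. f n n = 1" and "0 \<le> n" and "n < k"
  shows "f n k = 0"
proof -
  have "\<forall>n\<ge>0. f n (n + d) = 0" if "1 \<le> d" for d
    using that
  proof (induction d rule: int_ge_induct)
    case base
    show ?case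
    proof (intro allI impI)
      fix n :: int assume "0 \<le> n"
      then have "f (n + 1) (n + 1) = f n (n + 1) + f n (n + 1 - 1) * bigW w (n + 1) (n + 1 - (n + 1))"
        by (intro wbinom_recD[OF rec]) auto
      with diag show "f n (n + 1) = 0" by simp
    qed
  next
    case (step d)
    show ?case
    proof (intro allI impI)
      fix n :: int assume "0 \<le> n"
      then have "f (n + 1) (n + 1 + d)
          = f n (n + 1 + d) + f n (n + 1 + d - 1) * bigW w (n + 1 + d) (n + 1 - (n + 1 + d))"
        by (intro wbinom_recD[OF rec]) auto
      moreover have "f (n + 1) (n + 1 + d) = 0" "f n (n + d) = 0" using step \<open>0 \<le> n\<close> by auto
      ultimately show "f n (n + (d + 1)) = 0" by (simp add: ac_simps)
    qed
  qed
  with assms(4) have "\<forall>n'\<ge>0. f n' (n' + (k - n)) = 0" by simp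
  with assms(3) have "f n (n + (k - n)) = 0" by blast
  then show ?thesis by simp
qed

lemma wbinom_rec_diag_neg:
  assumes rec: "wbinom_rec w f" and col: "\<forall>n. f n 0 = 1" and nz: "\<forall>s t. w s t \<noteq> 0"
    and "f (-1) (-1) = 1" and "n < 0"
  shows "f n n = 1"
  using \<open>n < 0\<close>
proof (induction n rule: int_less_induct)
  case base
  show ?case using assms(4) by simp
next
  case (step i)
  then have "f (i - 1 + 1) i = f (i - 1) i + f (i - 1) (i - 1) * bigW w i (i - 1 + 1 - i)"
    by (intro wbinom_recD[OF rec]) auto
  moreover have "f (i - 1) i = 0"
    using step by (intro wbinom_rec_vanish_left[OF rec col nz]) auto
  ultimately show ?case using step by simp
qed

lemma is_wbinom_row_0:
  assumes f: "is_wbinom w f" and nz: "\<forall>s t. w s t \<noteq> 0"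
  shows "f 0 k = (if k = 0 then 1 else 0)"
  using f by (cases k "0::int" rule: linorder_cases)
    (auto intro: wbinom_rec_vanish_left[OF _ _ nz] wbinom_rec_vanish_above_diag simp: is_wbinom_def)

lemma is_wbinom_row_below_unique:
  assumes f: "is_wbinom w f" and g: "is_wbinom w g" and nz: "\<forall>s t. w s t \<noteq> 0"
    and "f i = g i"
  shows "f (i - 1) = g (i - 1)"
proof (rule first_order_recurrence_unique[where a = "\<lambda>k. bigW w k (i - k)" and g = "f i" and c = 0])
  have rec: "wbinom_rec w f" "wbinom_rec w g" using f g by (simp_all add: is_wbinom_def)
  show "\<forall>k. bigW w k (i - k) \<noteq> 0" using bigW_nonzero[OF nz] by simp
  show "\<forall>k. k \<noteq> 0 \<longrightarrow> f i k = f (i - 1) k + f (i - 1) (k - 1) * bigW w k (i - k)"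
    using wbinom_recD[OF rec(1), of "i - 1"] by simp
  show "\<forall>k. k \<noteq> 0 \<longrightarrow> f i k = g (i - 1) k + g (i - 1) (k - 1) * bigW w k (i - k)"
    using wbinom_recD[OF rec(2), of "i - 1"] \<open>f i = g i\<close> by simp
  show "f (i - 1) 0 = g (i - 1) 0" using f g by (simp add: is_wbinom_def)
  show "f (i - 1) (0 - 1) = g (i - 1) (0 - 1)"
  proof (cases "i = 0")
    case True
    then show ?thesis using f g by (simp add: is_wbinom_def)
  next
    case False
    then have "f i 0 = f (i - 1) 0 + f (i - 1) (0 - 1) * bigW w 0 i"
      "g i 0 = g (i - 1) 0 + g (i - 1) (0 - 1) * bigW w 0 i"
      using wbinom_recD[OF rec(1), of "i - 1" 0] wbinom_recD[OF rec(2), of "i - 1" 0] by auto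
    with f g \<open>f i = g i\<close> bigW_nonzero[OF nz] show ?thesis by (simp add: is_wbinom_def)
  qed
qed

lemma is_wbinom_unique:
  assumes f: "is_wbinom w f" and g: "is_wbinom w g" and nz: "\<forall>s t. w s t \<noteq> 0"
  shows "f = g"
proof
  fix n
  show "f n = g n"
  proof (induction n rule: int_induct[where k = 0])
    case base
    show ?case using is_wbinom_row_0[OF f nz] is_wbinom_row_0[OF g nz] by auto
  next
    case (step1 i)
    then show ?case
      using f g wbinom_recD[of w f i] wbinom_recD[of w g i] by (auto simp: is_wbinom_def)
  next
    case (step2 i)
    then show ?case by (intro is_wbinom_row_below_unique[OF f g nz])
  qed
qed

text \<open>
  For n \<noteq> -1 the recurrence at k = 0 forces the value at -1; for n = -1 that instance of the
  recurrence is exempt, and the diagonal condition fixes the value instead.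
\<close>
definition row_below ::
    "(int \<Rightarrow> int \<Rightarrow> 'a::field) \<Rightarrow> int \<Rightarrow> (int \<Rightarrow> 'a) \<Rightarrow> int \<Rightarrow> 'a" where
  "row_below w n g =
    (SOME h. h (- 1) = (if n = - 1 then 1 else (g 0 - 1) / bigW w 0 (n + 1)) \<and> h 0 = 1
      \<and> (\<forall>k. k \<noteq> 0 \<longrightarrow> g k = h k + h (k - 1) * bigW w k (n + 1 - k)))"

lemma row_below_spec:
  fixes w :: "int \<Rightarrow> int \<Rightarrow> 'a::field" and n :: int and g :: "int \<Rightarrow> 'a"
  assumes nz: "\<forall>s t. w s t \<noteq> 0"
  defines "h \<equiv> row_below w n g"
  shows "h (- 1) = (if n = - 1 then 1 else (g 0 - 1) / bigW w 0 (n + 1))" and "h 0 = 1"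
    and "\<And>k. k \<noteq> 0 \<Longrightarrow> g k = h k + h (k - 1) * bigW w k (n + 1 - k)"
proof -
  let ?u = "if n = - 1 then 1 else (g 0 - 1) / bigW w 0 (n + 1)"
  have "\<forall>k. bigW w k (n + 1 - k) \<noteq> 0" using bigW_nonzero[OF nz] by simp
  from first_order_recurrence_exists[OF this, of 0 ?u 1 g]
  have "\<exists>h. h (- 1) = ?u \<and> h 0 = 1 \<and> (\<forall>k. k \<noteq> 0 \<longrightarrow> g k = h k + h (k - 1) * bigW w k (n + 1 - k))"
    by simp
  from someI_ex[OF this]
  show "h (- 1) = ?u" "h 0 = 1" "\<And>k. k \<noteq> 0 \<Longrightarrow> g k = h k + h (k - 1) * bigW w k (n + 1 - k)"
    unfolding h_def row_below_def by blast+
qed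

function wbinom_table :: "(int \<Rightarrow> int \<Rightarrow> 'a::field) \<Rightarrow> int \<Rightarrow> int \<Rightarrow> 'a" where
  "wbinom_table w n =
    (if n = 0 then (\<lambda>k. if k = 0 then 1 else 0)
     else if 0 < n then
       (\<lambda>k. wbinom_table w (n - 1) k + wbinom_table w (n - 1) (k - 1) * bigW w k (n - k))
     else row_below w n (wbinom_table w (n + 1)))"
  by auto
termination by (relation "measure (\<lambda>(w, n). nat \<bar>n\<bar>)") auto

declare wbinom_table.simps [simp del]

lemma wbinom_table_0: "wbinom_table w 0 k = (if k = 0 then 1 else 0)"
  by (subst wbinom_table.simps) simp

lemma wbinom_table_pos:
  "0 \<le> n \<Longrightarrow>
    wbinom_table w (n + 1) k = wbinom_table w n k + wbinom_table w n (k - 1) * bigW w k (n + 1 - k)"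
  by (subst wbinom_table.simps) simp

lemma wbinom_table_neg: "n < 0 \<Longrightarrow> wbinom_table w n = row_below w n (wbinom_table w (n + 1))"
  by (subst wbinom_table.simps) simp

lemma wbinom_rec_wbinom_table:
  assumes nz: "\<forall>s t. w s t \<noteq> 0"
  shows "wbinom_rec w (wbinom_table w)"
  unfolding wbinom_rec_def
proof (intro allI impI)
  fix n k :: int
  assume nk: "(n + 1, k) \<noteq> (0, 0)"
  show "wbinom_table w (n + 1) k = wbinom_table w n k + wbinom_table w n (k - 1) * bigW w k (n + 1 - k)"
  proof (cases "0 \<le> n")
    case True
    then show ?thesis by (rule wbinom_table_pos)
  next
    case False
    then have tab: "wbinom_table w n = row_below w n (wbinom_table w (n + 1))" by (simp add: wbinom_table_neg)
    show ?thesis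
    proof (cases "k = 0")
      case True
      with nk have "n \<noteq> - 1" by auto
      with True tab row_below_spec(1,2)[OF nz, of n "wbinom_table w (n + 1)"] bigW_nonzero[OF nz]
      show ?thesis by simp
    next
      case False
      with tab row_below_spec(3)[OF nz, where n = n and g = "wbinom_table w (n + 1)" and k = k]
      show ?thesis by simp
    qed
  qed
qed

lemma wbinom_table_vanish:
  assumes "0 \<le> n" and "k < 0 \<or> n < k"
  shows "wbinom_table w n k = 0"
  using assms
proof (induction n arbitrary: k rule: int_ge_induct)
  case base
  then show ?case by (auto simp: wbinom_table_0)
next
  case (step i)
  then show ?case by (auto simp: wbinom_table_pos)
qed

lemma wbinom_table_col_0:
  assumes nz: "\<forall>s t. w s t \<noteq> 0"
  shows "wbinom_table w n 0 = 1"
proof (cases "0 \<le> n")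
  case True
  then show ?thesis
    by (induction n rule: int_ge_induct) (simp_all add: wbinom_table_0 wbinom_table_pos wbinom_table_vanish)
next
  case False
  then show ?thesis using row_below_spec(2)[OF nz] by (simp add: wbinom_table_neg)
qed

lemma wbinom_table_diag:
  assumes nz: "\<forall>s t. w s t \<noteq> 0"
  shows "wbinom_table w n n = 1"
proof (cases "0 \<le> n")
  case True
  then show ?thesis
    by (induction n rule: int_ge_induct) (simp_all add: wbinom_table_0 wbinom_table_pos wbinom_table_vanish)
next
  case False
  have "wbinom_table w (- 1) (- 1) = 1" using row_below_spec(1)[OF nz] by (simp add: wbinom_table_neg)
  from wbinom_rec_diag_neg[OF wbinom_rec_wbinom_table[OF nz] _ nz this] False
  show ?thesis by (simp add: wbinom_table_col_0[OF nz])
qed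

lemma is_wbinom_wbinom:
  assumes nz: "\<forall>s t. w s t \<noteq> 0"
  shows "is_wbinom w (wbinom w)"
proof -
  have "is_wbinom w (wbinom_table w)"
    using wbinom_table_col_0[OF nz] wbinom_table_diag[OF nz] wbinom_rec_wbinom_table[OF nz]
    by (simp add: is_wbinom_def)
  then have "\<exists>!f. is_wbinom w f" using is_wbinom_unique[OF _ _ nz] by blast
  then show ?thesis unfolding wbinom_eq_The by (rule theI')
qed

lemma wbinom_0_right: "\<forall>s t. w s t \<noteq> 0 \<Longrightarrow> wbinom w n 0 = 1"
  using is_wbinom_wbinom by (auto simp: is_wbinom_def)

lemma wbinom_0_left: "\<forall>s t. w s t \<noteq> 0 \<Longrightarrow> wbinom w 0 k = (if k = 0 then 1 else 0)"
  by (rule is_wbinom_row_0[OF is_wbinom_wbinom])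

lemma wbinom_pascal:
  assumes "\<forall>s t. w s t \<noteq> 0" and "(n + 1, k) \<noteq> (0, 0)"
  shows "wbinom w (n + 1) k = wbinom w n k + wbinom w n (k - 1) * bigW w k (n + 1 - k)"
  using wbinom_recD[OF _ assms(2)] is_wbinom_wbinom[OF assms(1)] unfolding is_wbinom_def by blast

lemma pascal_recurrence_unique:
  fixes F G c :: "int \<Rightarrow> int \<Rightarrow> 'a::ring"
  assumes col: "\<And>m. F m 0 = G m 0" and row: "\<And>k. 0 \<le> k \<Longrightarrow> F 0 k = G 0 k"
    and F: "\<And>m k. 1 \<le> k \<Longrightarrow> F (m + 1) k = F m k + F m (k - 1) * c m k"
    and G: "\<And>m k. 1 \<le> k \<Longrightarrow> G (m + 1) k = G m k + G m (k - 1) * c m k"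
    and "0 \<le> k"
  shows "F m k = G m k"
proof -
  have "\<forall>k\<ge>0. F m k = G m k"
  proof (induction m rule: int_induct[where k = 0])
    case base
    then show ?case using row by blast
  next
    case (step1 i)
    show ?case
    proof (intro allI impI)
      fix k :: int
      assume "0 \<le> k"
      then consider "k = 0" | "1 \<le> k" by linarith
      then show "F (i + 1) k = G (i + 1) k"
        by cases (use col F G step1 in simp_all)
    qed
  next
    case (step2 i)
    show ?case
    proof (intro allI impI)
      fix k :: int
      assume "0 \<le> k"
      then show "F (i - 1) k = G (i - 1) k"
      proof (induction k rule: int_ge_induct)
        case base
        show ?case by (rule col)
      next
        case (step k)
        have "F (i - 1 + 1) (k + 1) = G (i - 1 + 1) (k + 1)" using step2 step.hyps by simp
        with F[of "k + 1" "i - 1"] G[of "k + 1" "i - 1"] step show ?case by simp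
      qed
    qed
  qed
  with \<open>0 \<le> k\<close> show ?thesis by blast
qed

definition wbinom_conv :: "(int \<Rightarrow> int \<Rightarrow> 'a::field) \<Rightarrow> int \<Rightarrow> int \<Rightarrow> int \<Rightarrow> 'a" where
  "wbinom_conv w n m k =
    (\<Sum>j\<in>{0..k}. wbinom w n j * wbinom (\<lambda>s t. w (s + j) (t + n - j)) m (k - j)
        * (\<Prod>i\<in>{1..k - j}. bigW w (i + j) (n - j)))"

lemma wbinom_conv_0_right:
  assumes "\<forall>s t. w s t \<noteq> 0"
  shows "wbinom_conv w n m 0 = 1"
  using assms by (simp add: wbinom_conv_def wbinom_0_right)

lemma wbinom_conv_0_middle:
  assumes nz: "\<forall>s t. w s t \<noteq> 0" and "0 \<le> k"
  shows "wbinom_conv w n 0 k = wbinom w n k"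
proof -
  have "wbinom_conv w n 0 k = (\<Sum>j\<in>{0..k}. if j = k then wbinom w n k else 0)"
    unfolding wbinom_conv_def using nz by (intro sum.cong) (auto simp: wbinom_0_left)
  with \<open>0 \<le> k\<close> show ?thesis by simp
qed

lemma bigW_shifted_weights:
  fixes w :: "int \<Rightarrow> int \<Rightarrow> 'a::field"
  assumes "\<forall>s t. w s t \<noteq> 0"
  shows "bigW (\<lambda>s t. w (s + j) (t + n - j)) (k - j) b * bigW w k (n - j) = bigW w k (n - j + b)"
proof -
  have "bigW (\<lambda>s t. w (s + j) (t + n - j)) (k - j) b = bigW (\<lambda>s t. w s (t + (n - j))) k b"
    by (simp add: bigW_def algebra_simps)
  with bigW_add[of w k "n - j" b] assms show ?thesis by (simp add: mult.commute)
qed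

lemma wbinom_conv_pascal:
  assumes nz: "\<forall>s t. w s t \<noteq> 0" and "1 \<le> k"
  shows "wbinom_conv w n (m + 1) k
    = wbinom_conv w n m k + wbinom_conv w n m (k - 1) * bigW w k (n + m + 1 - k)"
proof -
  define T where "T m k j = wbinom w n j * wbinom (\<lambda>s t. w (s + j) (t + n - j)) m (k - j)
      * (\<Prod>i\<in>{1..k - j}. bigW w (i + j) (n - j))" for m k j
  have conv: "wbinom_conv w n m k = sum (T m k) {0..k}" for m k
    by (simp add: wbinom_conv_def T_def)
  have nz_j: "\<forall>s t. w (s + j) (t + n - j) \<noteq> 0" for j
    using nz by simp
  have T_pascal: "T (m + 1) k j = T m k j + T m (k - 1) j * bigW w k (n + m + 1 - k)"
    if "0 \<le> j" "j \<le> k - 1" for j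
  proof -
    have "{1..k - j} = insert (k - j) {1..k - 1 - j}" using that by auto
    then have prod: "(\<Prod>i\<in>{1..k - j}. bigW w (i + j) (n - j))
        = (\<Prod>i\<in>{1..k - 1 - j}. bigW w (i + j) (n - j)) * bigW w k (n - j)"
      by (simp add: mult.commute)
    let ?wj = "\<lambda>s t. w (s + j) (t + n - j)"
    have "(m + 1, k - j) \<noteq> (0, 0)" using that by simp
    from wbinom_pascal[OF nz_j[of j] this]
    have "wbinom ?wj (m + 1) (k - j)
        = wbinom ?wj m (k - j) + wbinom ?wj m (k - 1 - j) * bigW ?wj (k - j) (m + 1 - (k - j))"
      by (simp add: algebra_simps)
    moreover have "bigW ?wj (k - j) (m + 1 - (k - j)) * bigW w k (n - j) = bigW w k (n + m + 1 - k)"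
      using bigW_shifted_weights[OF nz, of j n k "m + 1 - (k - j)"] by (simp add: algebra_simps)
    ultimately show ?thesis unfolding T_def prod by (simp add: algebra_simps)
  qed
  have T_last: "T (m + 1) k k = T m k k"
    using nz_j by (simp add: T_def wbinom_0_right)
  have split: "{0..k} = insert k {0..k - 1}" using \<open>1 \<le> k\<close> by auto
  have "sum (T (m + 1) k) {0..k} = sum (T (m + 1) k) {0..k - 1} + T m k k"
    by (simp add: split T_last)
  also have "\<dots> = sum (T m k) {0..k - 1} + T m k k
      + sum (T m (k - 1)) {0..k - 1} * bigW w k (n + m + 1 - k)"
    by (simp add: T_pascal sum.distrib sum_distrib_right)
  also have "\<dots> = sum (T m k) {0..k} + sum (T m (k - 1)) {0..k - 1} * bigW w k (n + m + 1 - k)"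
    by (simp add: split)
  finally show ?thesis by (simp add: conv)
qed

theorem corollary1:
  fixes w :: "int \<Rightarrow> int \<Rightarrow> 'a::field" and n m k :: int
  assumes "\<forall>s t. w s t \<noteq> 0" and "0 \<le> k"
  shows "wbinom w (n + m) k =
    (\<Sum>j\<in>{0..k}. wbinom w n j * wbinom (\<lambda>s t. w (s + j) (t + n - j)) m (k - j)
        * (\<Prod>i\<in>{1..k - j}. bigW w (i + j) (n - j)))"
proof -
  have "wbinom w (n + m) k = wbinom_conv w n m k"
  proof (rule pascal_recurrence_unique[where c = "\<lambda>m k. bigW w k (n + m + 1 - k)"])
    show "wbinom w (n + m) 0 = wbinom_conv w n m 0" for m
      using assms(1) by (simp add: wbinom_0_right wbinom_conv_0_right)
    show "wbinom w (n + 0) k = wbinom_conv w n 0 k" if "0 \<le> k" for k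
      using assms(1) that by (simp add: wbinom_conv_0_middle)
    show "wbinom w (n + (m + 1)) k = wbinom w (n + m) k + wbinom w (n + m) (k - 1) * bigW w k (n + m + 1 - k)"
      if "1 \<le> k" for m k
      using wbinom_pascal[OF assms(1), of "n + m" k] that by (simp add: add.assoc)
    show "wbinom_conv w n (m + 1) k
        = wbinom_conv w n m k + wbinom_conv w n m (k - 1) * bigW w k (n + m + 1 - k)"
      if "1 \<le> k" for m k
      using wbinom_conv_pascal[OF assms(1) that] .
  qed (rule assms(2))
  then show ?thesis by (simp add: wbinom_conv_def)
qed

end
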